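(* Let $m,n\ge1$ be integers. If $(x,y,z)\in\mathbb{C}^3$ satisfies $v(x,y,z)=-2$ and $nS_m(z)+(n+1)S_{m-1}(z)=0$, then $$z=(n^2+n)(x+y)^2+xy+2.$$ Hence the set of such points contains no point of the form $(2,2,z)$ with $z\notin\mathbb{R}$.
   Context: $S_k(q)$ are the Chebyshev polynomials defined for all integers $k$ by $S_0=1$, $S_1=q$, $S_{k+1}=qS_k-S_{k-1}$. Here $v(x,y,z)=\big(xS_m(z)-yS_{m-1}(z)\big)\big(yS_m(z)-xS_{m-1}(z)\big)-z\big(S_m^2(z)+S_{m-1}^2(z)\big)+4S_m(z)S_{m-1}(z)$. *)

theory Defs
  imports Complex_Main
begin

(* Chebyshev polynomials S_k(q) for natural k: S_0 = 1, S_1 = q, S_{k+1} = q S_k - S_{k-1}.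
   (The paper defines S_k for all integers k; only k >= 0 is used since m >= 1.) *)
fun cheb :: "nat \<Rightarrow> complex \<Rightarrow> complex" where
  "cheb 0 q = 1"
| "cheb (Suc 0) q = q"
| "cheb (Suc (Suc k)) q = q * cheb (Suc k) q - cheb k q"

definition vpoly :: "nat \<Rightarrow> complex \<Rightarrow> complex \<Rightarrow> complex \<Rightarrow> complex" where
  "vpoly m x y z =
     (x * cheb m z - y * cheb (m - 1) z) * (y * cheb m z - x * cheb (m - 1) z)
     - z * ((cheb m z)\<^sup>2 + (cheb (m - 1) z)\<^sup>2) + 4 * cheb m z * cheb (m - 1) z"

end

theory Submission
  imports Defs
begin

text \<open>The Chebyshev polynomials satisfy the Cassini-type identity
  S_m^2 + S_(m-1)^2 - z S_m S_(m-1) = 1. On the line n S_m + (n+1) S_(m-1) = 0 the pair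
  (S_m, S_(m-1)) is a multiple t (-(n+1), n). After this substitution, v + 2 plus twice
  S_m^2 + S_(m-1)^2 - z S_m S_(m-1) - 1 equals t^2 ((n^2+n)(x+y)^2 + xy + 2 - z), and the
  Cassini identity forces t \<noteq> 0, so v = -2 determines z.\<close>

lemma cheb_cassini: "(cheb (Suc k) z)\<^sup>2 + (cheb k z)\<^sup>2 - z * cheb (Suc k) z * cheb k z = 1"
  by (induction k) (simp_all add: power2_eq_square algebra_simps)

lemma trace_eq_on_line:
  fixes a b x y z w :: "'a::field"
  assumes cassini: "a\<^sup>2 + b\<^sup>2 - z * a * b = 1"
    and v: "(x * a - y * b) * (y * a - x * b) - z * (a\<^sup>2 + b\<^sup>2) + 4 * a * b = -2"
    and line: "w * a + (w + 1) * b = 0"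
    and "w \<noteq> 0"
  shows "z = (w\<^sup>2 + w) * (x + y)\<^sup>2 + x * y + 2"
proof -
  define t where "t = b / w"
  have b: "b = w * t"
    using \<open>w \<noteq> 0\<close> by (simp add: t_def)
  have a: "a = - (w + 1) * t"
    using line \<open>w \<noteq> 0\<close> unfolding t_def by (simp add: field_simps eq_neg_iff_add_eq_0)
  have "t\<^sup>2 * ((w + 1)\<^sup>2 + w\<^sup>2 + z * (w\<^sup>2 + w)) = 1"
    using cassini unfolding a b by (simp add: power2_eq_square algebra_simps)
  then have "t\<^sup>2 \<noteq> 0"
    by auto
  have "t\<^sup>2 * ((w\<^sup>2 + w) * (x + y)\<^sup>2 + x * y + 2 - z)
      = ((x * a - y * b) * (y * a - x * b) - z * (a\<^sup>2 + b\<^sup>2) + 4 * a * b + 2)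
        + 2 * (a\<^sup>2 + b\<^sup>2 - z * a * b - 1)"
    unfolding a b by (simp add: power2_eq_square algebra_simps)
  also have "\<dots> = 0"
    using cassini v by simp
  finally show ?thesis
    using \<open>t\<^sup>2 \<noteq> 0\<close> by simp
qed

lemma vpoly_trace_eq_on_line:
  assumes "m \<ge> 1" and "w \<noteq> 0"
    and "vpoly m x y z = -2"
    and "w * cheb m z + (w + 1) * cheb (m - 1) z = 0"
  shows "z = (w\<^sup>2 + w) * (x + y)\<^sup>2 + x * y + 2"
proof -
  obtain k where m: "m = Suc k"
    using \<open>m \<ge> 1\<close> by (cases m) auto
  show ?thesis
    using trace_eq_on_line[OF cheb_cassini[of k z]] assms
    unfolding m vpoly_def by (simp add: mult.assoc)
qed

theorem lemma4p14:
  fixes m n :: nat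
  assumes "m \<ge> 1" and "n \<ge> 1"
  shows "(\<forall>x y z. vpoly m x y z = -2 \<and>
            of_nat n * cheb m z + of_nat (n + 1) * cheb (m - 1) z = 0 \<longrightarrow>
            z = of_nat (n\<^sup>2 + n) * (x + y)\<^sup>2 + x * y + 2)
       \<and> (\<forall>z. vpoly m 2 2 z = -2 \<and>
            of_nat n * cheb m z + of_nat (n + 1) * cheb (m - 1) z = 0 \<longrightarrow>
            z \<in> \<real>)"
proof -
  have trace: "z = of_nat (n\<^sup>2 + n) * (x + y)\<^sup>2 + x * y + 2"
    if "vpoly m x y z = -2" and "of_nat n * cheb m z + of_nat (n + 1) * cheb (m - 1) z = 0"
    for x y z
    using vpoly_trace_eq_on_line[of m "of_nat n"] assms that by (simp add: add.commute)
  have "z \<in> \<real>"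
    if "vpoly m 2 2 z = -2" and "of_nat n * cheb m z + of_nat (n + 1) * cheb (m - 1) z = 0"
    for z
  proof -
    have "z = of_real (real (n\<^sup>2 + n) * 16 + 6)"
      using trace[OF that] by simp
    then show ?thesis
      by simp
  qed
  with trace show ?thesis
    by blast
qed

end
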